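(* Let $E\in M_n(\mathbb{FT})$ be an idempotent of rank $n$, and let $H_E$ be its $\mathcal{H}$-class in $M_n(\mathbb{FT})$. Let $G_E$ be the set of all units $G$ of the monoid $M_n(\mathbb{T})$ which commute with $E$ (i.e. $G\otimes E=E\otimes G$). Then the map $G_E\to H_E$, $G\mapsto G\otimes E=E\otimes G$ is an isomorphism of groups.
   Context: $\mathbb{FT}$ is $\mathbb{R}$ with $a\oplus b=\max(a,b)$, $a\otimes b=a+b$; $\mathbb{T}=\mathbb{R}\cup\{-\infty\}$ with $a\oplus-\infty=a$ and $a\otimes-\infty=-\infty$. $M_n(\mathbb{FT})\subseteq M_n(\mathbb{T})$ are the sets of $n\times n$ matrices over these, under $(A\otimes B)_{i,j}=\bigoplus_k A_{i,k}\otimes B_{k,j}$; $M_n(\mathbb{T})$ is a monoid whose identity has $0$ on the diagonal and $-\infty$ elsewhere, and its units are exactly the matrices with exactly one entry different from $-\infty$ in each row and column. $C(E)$ is the subset of $\mathbb{FT}^n$ of all finite maxima of columns of $E$ shifted by real constants. The rank of an idempotent $E$ is the minimal cardinality of a generating set of $C(E)$ (as a set closed under componentwise max and adding a real constant to all coordinates). Green's relations on a semigroup $S$: $a\,\mathcal{R}\,b$ iff $aS^1=bS^1$, $a\,\mathcal{L}\,b$ iff $S^1a=S^1b$, $\mathcal{H}=\mathcal{L}\cap\mathcal{R}$; the $\mathcal H$-class of an idempotent is a group. *)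

theory Defs
  imports "HOL-Algebra.Group" "HOL-Library.Extended_Real"
begin

text \<open>Tropical n x n matrices, n = CARD('n), entries in ereal.
  T = reals with -infinity; FT = reals. Max plays the role of oplus, + of otimes.\<close>

type_synonym 'n tmat = "'n \<Rightarrow> 'n \<Rightarrow> ereal"

definition tmult :: "('n::finite) tmat \<Rightarrow> 'n tmat \<Rightarrow> 'n tmat" where
  "tmult A B = (\<lambda>i j. Max (range (\<lambda>k. A i k + B k j)))"

definition tid :: "('n::finite) tmat" where
  "tid = (\<lambda>i j. if i = j then 0 else -\<infinity>)"

definition is_T :: "('n::finite) tmat \<Rightarrow> bool" where
  "is_T A \<longleftrightarrow> (\<forall>i j. A i j \<noteq> \<infinity>)"

definition is_FT :: "('n::finite) tmat \<Rightarrow> bool" where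
  "is_FT A \<longleftrightarrow> (\<forall>i j. \<exists>r::real. A i j = ereal r)"

definition is_unit_T :: "('n::finite) tmat \<Rightarrow> bool" where
  "is_unit_T A \<longleftrightarrow> is_T A \<and> (\<exists>B. is_T B \<and> tmult A B = tid \<and> tmult B A = tid)"

definition tspan :: "(('n::finite) \<Rightarrow> real) set \<Rightarrow> ('n \<Rightarrow> real) set" where
  "tspan X = {x. \<exists>S c. S \<subseteq> X \<and> finite S \<and> S \<noteq> {} \<and>
                  x = (\<lambda>i. Max ((\<lambda>v. c v + v i) ` S))}"

definition colspace :: "('n::finite) tmat \<Rightarrow> ('n \<Rightarrow> real) set" where
  "colspace E = tspan ((\<lambda>k. (\<lambda>i. real_of_ereal (E i k))) ` UNIV)"

definition trank :: "('n::finite) tmat \<Rightarrow> nat" where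
  "trank E = (LEAST m. \<exists>X. X \<subseteq> colspace E \<and> finite X \<and> tspan X = colspace E \<and> card X = m)"

text \<open>Green's relations in the semigroup S = M_n(FT) (ideals taken in S^1).\<close>
definition right_ideal_FT :: "('n::finite) tmat \<Rightarrow> 'n tmat set" where
  "right_ideal_FT A = insert A {tmult A X | X. is_FT X}"

definition left_ideal_FT :: "('n::finite) tmat \<Rightarrow> 'n tmat set" where
  "left_ideal_FT A = insert A {tmult X A | X. is_FT X}"

definition H_FT :: "('n::finite) tmat \<Rightarrow> 'n tmat \<Rightarrow> bool" where
  "H_FT A B \<longleftrightarrow> right_ideal_FT A = right_ideal_FT B \<and> left_ideal_FT A = left_ideal_FT B"

definition H_class_FT :: "('n::finite) tmat \<Rightarrow> 'n tmat set" where
  "H_class_FT E = {A. is_FT A \<and> H_FT A E}"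

definition G_of :: "('n::finite) tmat \<Rightarrow> 'n tmat set" where
  "G_of E = {G. is_unit_T G \<and> tmult G E = tmult E G}"

definition G_group :: "('n::finite) tmat \<Rightarrow> 'n tmat monoid" where
  "G_group E = \<lparr>carrier = G_of E, mult = tmult, one = tid\<rparr>"

definition H_group :: "('n::finite) tmat \<Rightarrow> 'n tmat monoid" where
  "H_group E = \<lparr>carrier = H_class_FT E, mult = tmult, one = E\<rparr>"

end

theory Submission
  imports Defs
begin

text \<open>
  Full rank forces the idempotent \<open>E\<close> to have zero diagonal and strictly negative cycles
  \<open>E a b + E b a < 0\<close> for \<open>a \<noteq> b\<close>: otherwise one column of \<open>E\<close> would be a tropical
  combination of the others. An element \<open>A\<close> of \<open>H\<^sub>E\<close> has a local inverse \<open>A'\<close>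
  (\<open>A \<otimes> A' = A' \<otimes> A = E\<close>), and the indices at which the zero diagonal of \<open>A \<otimes> A'\<close> is
  attained form a permutation \<open>\<sigma>\<close>; the monomial matrix \<open>G\<close> with entries \<open>A i (\<sigma> i)\<close> at
  \<open>(i, \<sigma> i)\<close> then satisfies \<open>G \<otimes> E = A = E \<otimes> G\<close>. Conversely \<open>G \<otimes> E \<in> H\<^sub>E\<close> for every
  unit \<open>G\<close> commuting with \<open>E\<close>. If \<open>G\<^sub>1 \<otimes> E = G\<^sub>2 \<otimes> E\<close>, the unit \<open>G\<^sub>1\<inverse> \<otimes> G\<^sub>2\<close>
  fixes \<open>E\<close>, and the negative cycles force it to be the identity.
\<close>

section \<open>Tropical matrix multiplication\<close>

lemma Max_range_ge: "f k \<le> Max (range (f :: 'n::finite \<Rightarrow> 'a::linorder))"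
  by (rule Max_ge) auto

lemma Max_range_attained: "\<exists>k. Max (range (f :: 'n::finite \<Rightarrow> 'a::linorder)) = f k"
proof -
  have "Max (range f) \<in> range f" by (rule Max_in) auto
  then show ?thesis by (metis rangeE)
qed

lemma Max_range_le: "(\<And>k. f k \<le> c) \<Longrightarrow> Max (range (f :: 'n::finite \<Rightarrow> 'a::linorder)) \<le> c"
  by (simp add: Max_le_iff)

lemma Max_range_eq_single:
  fixes f :: "'n::finite \<Rightarrow> ereal"
  assumes "\<And>k. k \<noteq> k0 \<Longrightarrow> f k = -\<infinity>"
  shows "Max (range f) = f k0"
proof (rule Max_eqI)
  fix y assume "y \<in> range f"
  then obtain k where "y = f k" by blast
  then show "y \<le> f k0" by (cases "k = k0") (simp_all add: assms)
qed auto

lemma Max_range_Max_range: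
  fixes g :: "'n::finite \<Rightarrow> 'm::finite \<Rightarrow> 'a::linorder"
  shows "Max (range (\<lambda>k. Max (range (g k)))) = Max (range (case_prod g))"
proof (rule order_antisym)
  show "Max (range (\<lambda>k. Max (range (g k)))) \<le> Max (range (case_prod g))"
    by (intro Max_range_le) (metis Max_range_ge case_prod_conv)
  show "Max (range (case_prod g)) \<le> Max (range (\<lambda>k. Max (range (g k))))"
    by (intro Max_range_le) (metis Max_range_ge case_prod_beta order_trans)
qed

lemma tmult_assoc: "tmult (tmult A B) C = tmult A (tmult B C)" for A B C :: "('n::finite) tmat"
proof (intro ext)
  fix i j
  have add_Max_right:
    "Max (range (\<lambda>l. A i l + B l k)) + C k j = Max (range (\<lambda>l. A i l + B l k + C k j))" for k
    using mono_Max_commute[of "\<lambda>x. x + C k j" "range (\<lambda>l. A i l + B l k)"]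
    by (simp add: add_right_mono monoI image_image)
  have add_Max_left:
    "A i l + Max (range (\<lambda>k. B l k + C k j)) = Max (range (\<lambda>k. A i l + (B l k + C k j)))" for l
    using mono_Max_commute[of "\<lambda>x. A i l + x" "range (\<lambda>k. B l k + C k j)"]
    by (simp add: add_left_mono monoI image_image)
  have "tmult (tmult A B) C i j = Max (range (\<lambda>(k, l). A i l + B l k + C k j))"
    unfolding tmult_def add_Max_right by (rule Max_range_Max_range)
  also have "\<dots> = Max (range (\<lambda>(l, k). A i l + (B l k + C k j)))"
    by (rule arg_cong[where f = Max]) (auto simp: add.assoc image_iff)
  also have "\<dots> = tmult A (tmult B C) i j"
    unfolding tmult_def add_Max_left by (rule Max_range_Max_range[symmetric])
  finally show "tmult (tmult A B) C i j = tmult A (tmult B C) i j" .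
qed

lemma tmult_ge: "A i k + B k j \<le> tmult A B i j"
  unfolding tmult_def by (rule Max_range_ge)

lemma tmult_attained: "\<exists>k. tmult A B i j = A i k + B k j"
  unfolding tmult_def by (rule Max_range_attained)

lemma is_FT_imp_is_T: "is_FT A \<Longrightarrow> is_T A"
  unfolding is_T_def is_FT_def by (metis PInfty_neq_ereal(1))

lemma is_T_tid: "is_T tid"
  unfolding is_T_def tid_def by simp

lemma is_T_tmult:
  assumes "is_T A" "is_T B"
  shows "is_T (tmult A B)"
  unfolding is_T_def
proof (intro allI)
  fix i j
  obtain k where "tmult A B i j = A i k + B k j" using tmult_attained by blast
  then show "tmult A B i j \<noteq> \<infinity>" using assms by (simp add: is_T_def)
qed

lemma tmult_tid_left: "is_T A \<Longrightarrow> tmult tid A = A"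
  unfolding tmult_def
proof (intro ext)
  fix i j assume "is_T A"
  then have "Max (range (\<lambda>k. tid i k + A k j)) = tid i i + A i j"
    by (intro Max_range_eq_single) (simp add: is_T_def tid_def)
  then show "Max (range (\<lambda>k. tid i k + A k j)) = A i j" by (simp add: tid_def)
qed

lemma tmult_tid_right: "is_T A \<Longrightarrow> tmult A tid = A"
  unfolding tmult_def
proof (intro ext)
  fix i j assume "is_T A"
  then have "Max (range (\<lambda>k. A i k + tid k j)) = A i j + tid j j"
    by (intro Max_range_eq_single) (simp add: is_T_def tid_def)
  then show "Max (range (\<lambda>k. A i k + tid k j)) = A i j" by (simp add: tid_def)
qed

definition rmat :: "('n::finite) tmat \<Rightarrow> 'n \<Rightarrow> 'n \<Rightarrow> real" where
  "rmat A i j = real_of_ereal (A i j)"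

lemma is_FT_entry: "is_FT A \<Longrightarrow> A i j = ereal (rmat A i j)"
  unfolding is_FT_def rmat_def by (metis real_of_ereal.simps(1))

lemma tmult_FT_entry:
  assumes "is_FT A" "is_FT B"
  shows "tmult A B i j = ereal (Max (range (\<lambda>k. rmat A i k + rmat B k j)))"
proof -
  have real_sum: "(\<lambda>k. A i k + B k j) = (\<lambda>k. ereal (rmat A i k + rmat B k j))"
    using is_FT_entry[OF assms(1)] is_FT_entry[OF assms(2)] by (simp add: fun_eq_iff)
  have "tmult A B i j = Max (ereal ` range (\<lambda>k. rmat A i k + rmat B k j))"
    unfolding tmult_def image_image real_sum ..
  also have "\<dots> = ereal (Max (range (\<lambda>k. rmat A i k + rmat B k j)))"
    by (rule mono_Max_commute[symmetric]) (auto simp: monoI)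
  finally show ?thesis .
qed

lemma is_FT_tmult: "is_FT A \<Longrightarrow> is_FT B \<Longrightarrow> is_FT (tmult A B)"
  unfolding is_FT_def[of "tmult A B"] using tmult_FT_entry by blast

lemma rmat_tmult:
  "is_FT A \<Longrightarrow> is_FT B \<Longrightarrow> rmat (tmult A B) i j = Max (range (\<lambda>k. rmat A i k + rmat B k j))"
  by (simp add: rmat_def[of "tmult A B"] tmult_FT_entry)

lemma rmat_tmult_ge: "is_FT A \<Longrightarrow> is_FT B \<Longrightarrow> rmat A i k + rmat B k j \<le> rmat (tmult A B) i j"
  by (simp add: rmat_tmult Max_range_ge)

lemma rmat_tmult_attained: "is_FT A \<Longrightarrow> is_FT B \<Longrightarrow> \<exists>k. rmat (tmult A B) i j = rmat A i k + rmat B k j"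
  by (simp add: rmat_tmult Max_range_attained)

text \<open>Row \<open>i\<close> of a unit \<open>G\<close> has a finite entry, as \<open>(G \<otimes> B) i i = 0\<close>; it makes row \<open>i\<close> of
  \<open>G \<otimes> E\<close> finite.\<close>

lemma is_FT_unit_tmult:
  assumes "is_T G" "is_T B" "tmult G B = tid" "is_FT E"
  shows "is_FT (tmult G E)"
  unfolding is_FT_def
proof (intro allI)
  fix i j
  obtain k where "tmult G B i i = G i k + B k i" using tmult_attained by blast
  then have "G i k + B k i = 0" using assms(3) by (simp add: tid_def)
  then obtain g where g: "G i k = ereal g"
    using assms(1,2) unfolding is_T_def by (cases "G i k"; cases "B k i") auto
  have "ereal (g + rmat E k j) \<le> tmult G E i j"
    using tmult_ge[of G i k E j] g is_FT_entry[OF assms(4), of k j] by simp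
  moreover have "tmult G E i j \<noteq> \<infinity>"
    using is_T_tmult[OF assms(1) is_FT_imp_is_T[OF assms(4)]] unfolding is_T_def by blast
  ultimately show "\<exists>r. tmult G E i j = ereal r" by (cases "tmult G E i j") auto
qed

section \<open>Tropical spans and full rank\<close>

lemma tspan_shift: "x \<in> tspan X \<Longrightarrow> (\<lambda>i. r + x i) \<in> tspan X"
proof -
  assume "x \<in> tspan X"
  then obtain S c where S: "S \<subseteq> X" "finite S" "S \<noteq> {}"
    and x: "x = (\<lambda>i. Max ((\<lambda>v. c v + v i) ` S))"
    unfolding tspan_def by blast
  have "r + x i = Max ((\<lambda>v. (r + c v) + v i) ` S)" for i
  proof -
    have "r + x i = Max ((\<lambda>v. c v + v i) ` S) + r"
      unfolding x by (rule add.commute)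
    also have "\<dots> = Max ((\<lambda>v. c v + v i + r) ` S)"
      by (rule Max_add_commute[OF S(2,3), symmetric])
    also have "(\<lambda>v. c v + v i + r) = (\<lambda>v. (r + c v) + v i)"
      by (simp add: fun_eq_iff)
    finally show ?thesis .
  qed
  then show ?thesis
    unfolding tspan_def using S by (intro CollectI exI[of _ S] exI[of _ "\<lambda>v. r + c v"]) auto
qed

lemma tspan_max:
  assumes "x \<in> tspan X" "y \<in> tspan X"
  shows "(\<lambda>i. max (x i) (y i)) \<in> tspan X"
proof -
  obtain S1 c1 where S1: "S1 \<subseteq> X" "finite S1" "S1 \<noteq> {}"
    and x: "x = (\<lambda>i. Max ((\<lambda>v. c1 v + v i) ` S1))"
    using assms(1) unfolding tspan_def by blast
  obtain S2 c2 where S2: "S2 \<subseteq> X" "finite S2" "S2 \<noteq> {}"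
    and y: "y = (\<lambda>i. Max ((\<lambda>v. c2 v + v i) ` S2))"
    using assms(2) unfolding tspan_def by blast
  define c where "c v = (if v \<in> S1 \<and> v \<in> S2 then max (c1 v) (c2 v) else if v \<in> S1 then c1 v else c2 v)"
    for v
  have fin: "finite (S1 \<union> S2)" "S1 \<union> S2 \<noteq> {}" using S1 S2 by auto
  have c_ge: "v \<in> S1 \<Longrightarrow> c1 v \<le> c v" "v \<in> S2 \<Longrightarrow> c2 v \<le> c v" for v
    by (auto simp: c_def)
  have c_cases: "v \<in> S1 \<and> c v = c1 v \<or> v \<in> S2 \<and> c v = c2 v" if "v \<in> S1 \<union> S2" for v
    using that by (auto simp: c_def max_def)
  have "max (x i) (y i) = Max ((\<lambda>v. c v + v i) ` (S1 \<union> S2))" (is "_ = ?M") for i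
  proof (rule order_antisym)
    have bound: "c v + v i \<le> ?M" if "v \<in> S1 \<union> S2" for v
      using fin that by simp
    have "c1 v + v i \<le> ?M" if "v \<in> S1" for v
      using c_ge(1)[OF that] bound[of v] that by simp
    then have "x i \<le> ?M"
      unfolding x using S1 by (intro Max.boundedI) auto
    have "c2 v + v i \<le> ?M" if "v \<in> S2" for v
      using c_ge(2)[OF that] bound[of v] that by simp
    then have "y i \<le> ?M"
      unfolding y using S2 by (intro Max.boundedI) auto
    with \<open>x i \<le> ?M\<close> show "max (x i) (y i) \<le> ?M" by simp
    have x_ge: "c1 v + v i \<le> x i" if "v \<in> S1" for v
      unfolding x using S1 that by simp
    have y_ge: "c2 v + v i \<le> y i" if "v \<in> S2" for v
      unfolding y using S2 that by simp
    show "?M \<le> max (x i) (y i)"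
    proof (rule Max.boundedI)
      fix a assume "a \<in> (\<lambda>v. c v + v i) ` (S1 \<union> S2)"
      then obtain v where v: "v \<in> S1 \<union> S2" "a = c v + v i" by blast
      from c_cases[OF v(1)] show "a \<le> max (x i) (y i)"
        using v(2) x_ge y_ge by (auto intro: le_max_iff_disj[THEN iffD2])
    qed (use fin in auto)
  qed
  then show ?thesis
    unfolding tspan_def using S1 S2 by (intro CollectI exI[of _ "S1 \<union> S2"] exI[of _ c]) auto
qed

lemma subset_tspan: "X \<subseteq> tspan X"
proof
  fix x assume "x \<in> X"
  then show "x \<in> tspan X"
    unfolding tspan_def by (intro CollectI exI[of _ "{x}"] exI[of _ "\<lambda>_. 0"]) auto
qed

lemma Max_shifted_mem_closed:
  fixes C :: "('n \<Rightarrow> real) set"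
  assumes shift: "\<And>x r. x \<in> C \<Longrightarrow> (\<lambda>i. r + x i) \<in> C"
    and max: "\<And>x y. x \<in> C \<Longrightarrow> y \<in> C \<Longrightarrow> (\<lambda>i. max (x i) (y i)) \<in> C"
    and M: "finite M" "M \<noteq> {}" "\<And>m. m \<in> M \<Longrightarrow> w m \<in> C"
  shows "(\<lambda>i. Max ((\<lambda>m. c m + w m i) ` M)) \<in> C"
  using M
proof (induction M rule: finite_ne_induct)
  case (singleton m)
  then show ?case using shift by simp
next
  case (insert m M)
  have "(\<lambda>i. c m + w m i) \<in> C" using insert.prems shift by simp
  moreover have "(\<lambda>i. Max ((\<lambda>m. c m + w m i) ` M)) \<in> C" using insert by simp
  ultimately have "(\<lambda>i. max (c m + w m i) (Max ((\<lambda>m. c m + w m i) ` M))) \<in> C" by (rule max)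
  then show ?case using insert by simp
qed

lemma tspan_least:
  fixes C :: "('n::finite \<Rightarrow> real) set"
  assumes "\<And>x r. x \<in> C \<Longrightarrow> (\<lambda>i. r + x i) \<in> C"
    and "\<And>x y. x \<in> C \<Longrightarrow> y \<in> C \<Longrightarrow> (\<lambda>i. max (x i) (y i)) \<in> C"
    and "Y \<subseteq> C"
  shows "tspan Y \<subseteq> C"
proof
  fix x assume "x \<in> tspan Y"
  then obtain S c where S: "S \<subseteq> Y" "finite S" "S \<noteq> {}"
    and x: "x = (\<lambda>i. Max ((\<lambda>v. c v + v i) ` S))"
    unfolding tspan_def by blast
  have "(\<lambda>i. Max ((\<lambda>v. c v + v i) ` S)) \<in> C"
    by (rule Max_shifted_mem_closed[OF assms(1,2) S(2,3)]) (use S(1) assms(3) in auto)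
  then show "x \<in> C" unfolding x .
qed

lemma full_rank_no_redundant_column:
  fixes E :: "('n::finite) tmat"
  assumes rank: "trank E = card (UNIV :: 'n set)"
    and M: "j \<notin> M" "M \<noteq> {}"
    and col_j: "\<And>i. rmat E i j = Max ((\<lambda>m. f m + rmat E i m) ` M)"
  shows False
proof -
  define col where "col k = (\<lambda>i. rmat E i k)" for k
  define X where "X = col ` (UNIV - {j})"
  have colspace: "colspace E = tspan (range col)"
    unfolding colspace_def col_def rmat_def ..
  have X_sub: "X \<subseteq> tspan X" by (rule subset_tspan)
  have "col j = (\<lambda>i. Max ((\<lambda>m. f m + col m i) ` M))"
    using col_j unfolding col_def by auto
  also have "\<dots> \<in> tspan X"
  proof (rule Max_shifted_mem_closed[OF tspan_shift tspan_max])
    show "finite M" "M \<noteq> {}" using M(2) by simp_all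
    show "col m \<in> tspan X" if "m \<in> M" for m
    proof -
      have "col m \<in> X" unfolding X_def using that M(1) by auto
      with X_sub show ?thesis by (rule subsetD)
    qed
  qed
  finally have "col k \<in> tspan X" for k
    using X_sub unfolding X_def by (cases "k = j") auto
  then have "range col \<subseteq> tspan X" by blast
  then have "colspace E \<subseteq> tspan X"
    unfolding colspace by (intro tspan_least[OF tspan_shift tspan_max])
  moreover have "tspan X \<subseteq> colspace E"
    unfolding colspace X_def
    by (intro tspan_least[OF tspan_shift tspan_max] order_trans[OF image_mono subset_tspan]) auto
  ultimately have span: "tspan X = colspace E" by blast
  have "X \<subseteq> colspace E" "finite X" using X_sub span unfolding X_def by auto
  then have "trank E \<le> card X"
    unfolding trank_def by (intro Least_le exI[of _ X]) (simp add: span)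
  also have "\<dots> \<le> card (UNIV - {j})" unfolding X_def by (rule card_image_le) simp
  also have "\<dots> < card (UNIV :: 'n set)" by (simp add: card_Diff_singleton card_gt_0_iff)
  finally show False using rank by simp
qed

locale full_rank_idempotent =
  fixes E :: "('n::finite) tmat"
  assumes is_FT: "is_FT E" and idem: "tmult E E = E" and full_rank: "trank E = card (UNIV :: 'n set)"
begin

lemma rmat_triangle: "rmat E i k + rmat E k j \<le> rmat E i j"
  using rmat_tmult_ge[OF is_FT is_FT, of i k j] idem by simp

lemma rmat_triangle_attained: "\<exists>k. rmat E i j = rmat E i k + rmat E k j"
  using rmat_tmult_attained[OF is_FT is_FT, of i j] idem by simp

text \<open>If \<open>E j j < 0\<close>, the maximum in \<open>E i j = max\<^sub>k (E i k + E k j)\<close> is never attained at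
  \<open>k = j\<close>, so column \<open>j\<close> is a combination of the others.\<close>

lemma rmat_diag: "rmat E j j = 0"
proof (rule ccontr)
  assume "rmat E j j \<noteq> 0"
  moreover have "rmat E j j \<le> 0" using rmat_triangle[of j j j] by simp
  ultimately have neg: "rmat E j j < 0" by simp
  define M where "M = UNIV - {j}"
  have attained_off_j: "\<exists>k\<in>M. rmat E i j = rmat E i k + rmat E k j" for i
    using rmat_triangle_attained[of i j] neg unfolding M_def by fastforce
  show False
  proof (rule full_rank_no_redundant_column[OF full_rank])
    show "j \<notin> M" "M \<noteq> {}" using attained_off_j[of j] unfolding M_def by auto
    show "rmat E i j = Max ((\<lambda>m. rmat E m j + rmat E i m) ` M)" for i
    proof (rule antisym)
      obtain k where "k \<in> M" "rmat E i j = rmat E i k + rmat E k j"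
        using attained_off_j by blast
      moreover have "rmat E k j + rmat E i k \<le> Max ((\<lambda>m. rmat E m j + rmat E i m) ` M)"
        using \<open>k \<in> M\<close> by (intro Max_ge) (simp_all add: M_def)
      ultimately show "rmat E i j \<le> Max ((\<lambda>m. rmat E m j + rmat E i m) ` M)" by linarith
      show "Max ((\<lambda>m. rmat E m j + rmat E i m) ` M) \<le> rmat E i j"
        using \<open>M \<noteq> {}\<close> rmat_triangle[of i _ j] by (simp add: add.commute)
    qed
  qed
qed

text \<open>Otherwise column \<open>b\<close> would be column \<open>a\<close> shifted by \<open>E a b\<close>.\<close>

lemma rmat_two_cycle_neg: "a \<noteq> b \<Longrightarrow> rmat E a b + rmat E b a < 0"
proof (rule ccontr)
  assume ab: "a \<noteq> b" and "\<not> rmat E a b + rmat E b a < 0"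
  moreover have "rmat E a b + rmat E b a \<le> 0" using rmat_triangle[of a b a] rmat_diag[of a] by simp
  ultimately have cycle: "rmat E a b + rmat E b a = 0" by simp
  show False
  proof (rule full_rank_no_redundant_column[OF full_rank, of b "{a}" "\<lambda>_. rmat E a b"])
    show "rmat E i b = Max ((\<lambda>m. rmat E a b + rmat E i m) ` {a})" for i
      using rmat_triangle[of i a b] rmat_triangle[of i b a] cycle by simp
  qed (use ab in auto)
qed

lemma entry: "E i j = ereal (rmat E i j)"
  by (rule is_FT_entry[OF is_FT])

lemma diag: "E j j = 0"
  using entry[of j j] rmat_diag[of j] by (simp add: zero_ereal_def)

end

section \<open>Units commuting with \<open>E\<close>\<close>

definition monomial_mat :: "('n \<Rightarrow> 'n) \<Rightarrow> ('n \<Rightarrow> real) \<Rightarrow> ('n::finite) tmat" where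
  "monomial_mat \<sigma> w i j = (if j = \<sigma> i then ereal (w i) else -\<infinity>)"

lemma is_T_monomial_mat: "is_T (monomial_mat \<sigma> w)"
  unfolding is_T_def monomial_mat_def by simp

lemma tmult_monomial_mat_left:
  assumes "is_T A"
  shows "tmult (monomial_mat \<sigma> w) A i j = ereal (w i) + A (\<sigma> i) j"
proof -
  have "tmult (monomial_mat \<sigma> w) A i j = monomial_mat \<sigma> w i (\<sigma> i) + A (\<sigma> i) j"
    unfolding tmult_def using assms by (intro Max_range_eq_single) (simp add: is_T_def monomial_mat_def)
  then show ?thesis by (simp add: monomial_mat_def)
qed

lemma tmult_monomial_mat_right:
  assumes "bij \<sigma>" "is_T A"
  shows "tmult A (monomial_mat \<sigma> w) i j = A i (inv_into UNIV \<sigma> j) + ereal (w (inv_into UNIV \<sigma> j))"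
proof -
  have "tmult A (monomial_mat \<sigma> w) i j = A i (inv_into UNIV \<sigma> j) + monomial_mat \<sigma> w (inv_into UNIV \<sigma> j) j"
    unfolding tmult_def using assms
    by (intro Max_range_eq_single) (auto simp: is_T_def monomial_mat_def bij_inv_eq_iff)
  then show ?thesis using assms(1) by (simp add: monomial_mat_def bij_is_surj surj_f_inv_f)
qed

lemma is_unit_T_monomial_mat:
  assumes "bij \<sigma>"
  shows "is_unit_T (monomial_mat \<sigma> w)"
proof -
  define B where "B = monomial_mat (inv_into UNIV \<sigma>) (\<lambda>s. - w (inv_into UNIV \<sigma> s))"
  have "tmult (monomial_mat \<sigma> w) B = tid"
    using assms by (simp add: fun_eq_iff tmult_monomial_mat_left is_T_monomial_mat B_def monomial_mat_def
        tid_def bij_is_inj zero_ereal_def)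
  moreover have "tmult B (monomial_mat \<sigma> w) = tid"
    using assms by (simp add: fun_eq_iff tmult_monomial_mat_left is_T_monomial_mat B_def monomial_mat_def
        tid_def bij_is_surj surj_f_inv_f zero_ereal_def)
  ultimately show ?thesis
    unfolding is_unit_T_def using is_T_monomial_mat[of \<sigma>] is_T_monomial_mat[of "inv_into UNIV \<sigma>"] B_def by blast
qed

lemma G_ofE:
  assumes "G \<in> G_of E"
  obtains B where "is_T G" "is_T B" "tmult G B = tid" "tmult B G = tid" "tmult G E = tmult E G"
  using assms unfolding G_of_def is_unit_T_def by auto

lemma G_of_inverse:
  assumes "is_T E" "G \<in> G_of E" "is_T B" "tmult G B = tid" "tmult B G = tid"
  shows "B \<in> G_of E"
proof -
  have G: "is_T G" "tmult G E = tmult E G" using assms(2) unfolding G_of_def is_unit_T_def by auto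
  have "tmult B E = tmult (tmult B E) (tmult G B)"
    using assms(4) tmult_tid_right[OF is_T_tmult[OF assms(3,1)]] by simp
  also have "\<dots> = tmult (tmult B G) (tmult E B)"
    using G(2) by (metis tmult_assoc)
  also have "\<dots> = tmult E B"
    using assms(5) tmult_tid_left[OF is_T_tmult[OF assms(1,3)]] by simp
  finally show ?thesis
    unfolding G_of_def is_unit_T_def using assms(3-5) G(1) by auto
qed

lemma G_of_tmult:
  assumes "G1 \<in> G_of E" "G2 \<in> G_of E"
  shows "tmult G1 G2 \<in> G_of E"
proof -
  obtain B1 where B1: "is_T G1" "is_T B1" "tmult G1 B1 = tid" "tmult B1 G1 = tid" "tmult G1 E = tmult E G1"
    using assms(1) by (rule G_ofE)
  obtain B2 where B2: "is_T G2" "is_T B2" "tmult G2 B2 = tid" "tmult B2 G2 = tid" "tmult G2 E = tmult E G2"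
    using assms(2) by (rule G_ofE)
  have "tmult (tmult G1 G2) (tmult B2 B1) = tmult G1 (tmult (tmult G2 B2) B1)"
    by (simp add: tmult_assoc)
  also have "\<dots> = tid" using B1(3) B2(3) tmult_tid_left[OF B1(2)] by simp
  finally have right_inv: "tmult (tmult G1 G2) (tmult B2 B1) = tid" .
  have "tmult (tmult B2 B1) (tmult G1 G2) = tmult B2 (tmult (tmult B1 G1) G2)"
    by (simp add: tmult_assoc)
  also have "\<dots> = tid" using B1(4) B2(4) tmult_tid_left[OF B2(1)] by simp
  finally have left_inv: "tmult (tmult B2 B1) (tmult G1 G2) = tid" .
  have "tmult (tmult G1 G2) E = tmult E (tmult G1 G2)"
    using B1(5) B2(5) by (metis tmult_assoc)
  then show ?thesis
    unfolding G_of_def is_unit_T_def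
    using right_inv left_inv is_T_tmult[OF B1(1) B2(1)] is_T_tmult[OF B2(2) B1(2)] by blast
qed

lemma tid_in_G_of: "is_T E \<Longrightarrow> tid \<in> G_of E"
  unfolding G_of_def is_unit_T_def
  using is_T_tid tmult_tid_left tmult_tid_right by fastforce

lemma group_G_group:
  assumes "is_T E"
  shows "group (G_group E)"
proof (rule groupI)
  fix G assume "G \<in> carrier (G_group E)"
  then have G: "G \<in> G_of E" by (simp add: G_group_def)
  then obtain B where "is_T G" "is_T B" "tmult G B = tid" "tmult B G = tid"
    by (rule G_ofE)
  with G show "\<exists>B \<in> carrier (G_group E). B \<otimes>\<^bsub>G_group E\<^esub> G = \<one>\<^bsub>G_group E\<^esub>"
    using G_of_inverse[OF assms] by (auto simp: G_group_def)
  show "\<one>\<^bsub>G_group E\<^esub> \<otimes>\<^bsub>G_group E\<^esub> G = G"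
    using G by (auto simp: G_group_def G_of_def is_unit_T_def tmult_tid_left)
qed (use G_of_tmult tid_in_G_of[OF assms] in \<open>simp_all add: G_group_def tmult_assoc\<close>)

section \<open>The \<open>\<H>\<close>-class of \<open>E\<close>\<close>

lemma right_ideal_FT_subset:
  assumes "A \<in> right_ideal_FT B"
  shows "right_ideal_FT A \<subseteq> right_ideal_FT B"
proof
  fix X assume X: "X \<in> right_ideal_FT A"
  show "X \<in> right_ideal_FT B"
  proof (cases "X = A \<or> A = B")
    case True
    then show ?thesis using X assms by auto
  next
    case False
    then obtain Y Z where "is_FT Y" "A = tmult B Y" "is_FT Z" "X = tmult A Z"
      using X assms unfolding right_ideal_FT_def by auto
    then show ?thesis
      unfolding right_ideal_FT_def by (auto simp: tmult_assoc intro: is_FT_tmult)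
  qed
qed

lemma left_ideal_FT_subset:
  assumes "A \<in> left_ideal_FT B"
  shows "left_ideal_FT A \<subseteq> left_ideal_FT B"
proof
  fix X assume X: "X \<in> left_ideal_FT A"
  show "X \<in> left_ideal_FT B"
  proof (cases "X = A \<or> A = B")
    case True
    then show ?thesis using X assms by auto
  next
    case False
    then obtain Y Z where "is_FT Y" "A = tmult Y B" "is_FT Z" "X = tmult Z A"
      using X assms unfolding left_ideal_FT_def by auto
    then show ?thesis
      unfolding left_ideal_FT_def by (auto simp: tmult_assoc[symmetric] intro: is_FT_tmult)
  qed
qed

lemma mem_right_ideal_FT_idem: "tmult E E = E \<Longrightarrow> A \<in> right_ideal_FT E \<Longrightarrow> tmult E A = A"
  unfolding right_ideal_FT_def by (auto simp: tmult_assoc[symmetric])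

lemma mem_left_ideal_FT_idem: "tmult E E = E \<Longrightarrow> A \<in> left_ideal_FT E \<Longrightarrow> tmult A E = A"
  unfolding left_ideal_FT_def by (auto simp: tmult_assoc)

lemma H_class_FT_local_inverse:
  assumes E: "is_FT E" "tmult E E = E" and A: "A \<in> H_class_FT E"
  obtains A' where "is_FT A" "is_FT A'" "tmult E A = A" "tmult A E = A"
    "tmult A A' = E" "tmult A' A = E"
proof -
  have FA: "is_FT A" and R: "right_ideal_FT A = right_ideal_FT E"
    and L: "left_ideal_FT A = left_ideal_FT E"
    using A unfolding H_class_FT_def H_FT_def by auto
  have self_R: "X \<in> right_ideal_FT X" and self_L: "X \<in> left_ideal_FT X" for X
    unfolding right_ideal_FT_def left_ideal_FT_def by simp_all
  have "A \<in> right_ideal_FT E" using self_R[of A] R by simp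
  with E(2) have EA: "tmult E A = A" by (rule mem_right_ideal_FT_idem)
  have "A \<in> left_ideal_FT E" using self_L[of A] L by simp
  with E(2) have AE: "tmult A E = A" by (rule mem_left_ideal_FT_idem)
  have "E \<in> right_ideal_FT A" using self_R[of E] R by simp
  then obtain U where U: "is_FT U" "tmult A U = E"
    using E unfolding right_ideal_FT_def by (cases "E = A") auto
  have "E \<in> left_ideal_FT A" using self_L[of E] L by simp
  then obtain V where V: "is_FT V" "tmult V A = E"
    using E unfolding left_ideal_FT_def by (cases "E = A") auto
  have "tmult A (tmult V E) = tmult (tmult A (tmult V A)) U"
    using U(2) by (simp add: tmult_assoc)
  also have "\<dots> = E" using V(2) AE U(2) by simp
  moreover have "tmult (tmult V E) A = E" using EA V(2) by (simp add: tmult_assoc)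
  ultimately show ?thesis
    using that FA is_FT_tmult[OF V(1) E(1)] EA AE by blast
qed

lemma tmult_E_hom:
  assumes "tmult E E = E" "G2 \<in> G_of E"
  shows "tmult (tmult G1 G2) E = tmult (tmult G1 E) (tmult G2 E)"
proof -
  have "tmult (tmult G1 E) (tmult G2 E) = tmult G1 (tmult (tmult E G2) E)"
    by (simp add: tmult_assoc)
  also have "\<dots> = tmult G1 (tmult G2 (tmult E E))"
    using assms(2) unfolding G_of_def by (simp add: tmult_assoc[symmetric])
  finally show ?thesis using assms(1) by (simp add: tmult_assoc)
qed

lemma unit_tmult_in_H_class_FT:
  assumes E: "is_FT E" "tmult E E = E" and G: "G \<in> G_of E"
  shows "tmult G E \<in> H_class_FT E"
proof -
  obtain B where B: "is_T G" "is_T B" "tmult G B = tid" "tmult B G = tid" "tmult G E = tmult E G"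
    using G by (rule G_ofE)
  have TE: "is_T E" using E(1) by (rule is_FT_imp_is_T)
  have "B \<in> G_of E" using G_of_inverse[OF TE G B(2-4)] .
  then have BE: "tmult B E = tmult E B" unfolding G_of_def by simp
  have FGE: "is_FT (tmult G E)" using is_FT_unit_tmult[OF B(1-3) E(1)] .
  have FEB: "is_FT (tmult E B)" using is_FT_unit_tmult[OF B(2,1,4) E(1)] BE by simp
  have "tmult G E = tmult E (tmult E G)" using B(5) E(2) by (simp add: tmult_assoc[symmetric])
  then have R1: "tmult G E \<in> right_ideal_FT E"
    unfolding right_ideal_FT_def using FGE B(5) by auto
  have "tmult (tmult G E) (tmult E B) = E"
    using E(2) BE B(3) tmult_tid_left[OF TE] by (metis tmult_assoc)
  then have R2: "E \<in> right_ideal_FT (tmult G E)"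
    unfolding right_ideal_FT_def using FEB by auto
  have "tmult G E = tmult (tmult G E) E" using E(2) by (simp add: tmult_assoc)
  then have L1: "tmult G E \<in> left_ideal_FT E"
    unfolding left_ideal_FT_def using FGE by auto
  have "tmult (tmult E B) (tmult G E) = E"
    using E(2) B(4) tmult_tid_left[OF TE] by (metis tmult_assoc)
  then have L2: "E \<in> left_ideal_FT (tmult G E)"
    unfolding left_ideal_FT_def using FEB by auto
  show ?thesis
    unfolding H_class_FT_def H_FT_def
    using FGE right_ideal_FT_subset[OF R1] right_ideal_FT_subset[OF R2]
      left_ideal_FT_subset[OF L1] left_ideal_FT_subset[OF L2] by blast
qed

context full_rank_idempotent
begin

lemma le_entry_if_tmult_eq: "tmult K E = E \<Longrightarrow> K i j \<le> E i j"
  using tmult_ge[of K i j E j] diag[of j] by simp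

text \<open>A diagonal entry of \<open>K \<otimes> L = tid\<close> is attained at some \<open>m\<close> with
  \<open>0 = K i m + L m i \<le> E i m + E m i\<close>, which forces \<open>m = i\<close>.\<close>

lemma unit_fixing_diag:
  assumes "is_T K" "is_T L" "tmult K L = tid" "tmult K E = E" "tmult L E = E"
  shows "K i i = 0"
proof -
  obtain m where "tmult K L i i = K i m + L m i" using tmult_attained by blast
  then have cycle: "K i m + L m i = 0" using assms(3) by (simp add: tid_def)
  have "m = i"
  proof (rule ccontr)
    assume "m \<noteq> i"
    have "K i m + L m i \<le> E i m + E m i"
      using le_entry_if_tmult_eq[OF assms(4)] le_entry_if_tmult_eq[OF assms(5)] by (rule add_mono)
    also have "\<dots> < 0"
      using rmat_two_cycle_neg[OF \<open>m \<noteq> i\<close>[symmetric]] entry[of i m] entry[of m i] by simp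
    finally show False using cycle by simp
  qed
  moreover have "K i i \<le> 0" "L i i \<le> 0"
    using le_entry_if_tmult_eq[OF assms(4), of i i] le_entry_if_tmult_eq[OF assms(5), of i i] diag[of i]
    by simp_all
  ultimately show ?thesis
    using cycle assms(1,2) unfolding is_T_def by (cases "K i i"; cases "L i i") auto
qed

lemma unit_fixing_eq_tid:
  assumes "is_T K" "is_T L" "tmult K L = tid" "tmult L K = tid" "tmult K E = E" "tmult L E = E"
  shows "K = tid"
proof (intro ext)
  fix i j
  show "K i j = tid i j"
  proof (cases "i = j")
    case True
    then show ?thesis using unit_fixing_diag[OF assms(1-3,5,6)] by (simp add: tid_def)
  next
    case False
    have "K i j + L j j \<le> tmult K L i j" by (rule tmult_ge)
    moreover have "L j j = 0" using unit_fixing_diag[OF assms(2,1,4,6,5)] .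
    ultimately show ?thesis using False assms(3) by (simp add: tid_def)
  qed
qed

lemma local_inverse_permutation:
  assumes FA: "is_FT A" "is_FT A'" and EA: "tmult E A = A" and AE: "tmult A E = A"
    and AA': "tmult A A' = E" and A'A: "tmult A' A = E"
  obtains \<sigma> where "bij \<sigma>"
    "\<And>i m. rmat A i m = rmat A i (\<sigma> i) + rmat E (\<sigma> i) m"
    "\<And>i l. rmat A i (\<sigma> l) = rmat E i l + rmat A l (\<sigma> l)"
proof -
  have AA'_le: "rmat A i k + rmat A' k m \<le> rmat E i m" for i k m
    using rmat_tmult_ge[OF FA, of i k m] AA' by simp
  have A'A_le: "rmat A' i k + rmat A k m \<le> rmat E i m" for i k m
    using rmat_tmult_ge[OF FA(2,1), of i k m] A'A by simp
  have AE_le: "rmat A i k + rmat E k m \<le> rmat A i m" for i k m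
    using rmat_tmult_ge[OF FA(1) is_FT, of i k m] AE by simp
  have EA_le: "rmat E i k + rmat A k m \<le> rmat A i m" for i k m
    using rmat_tmult_ge[OF is_FT FA(1), of i k m] EA by simp
  have "\<exists>k. rmat A i k + rmat A' k i = 0" for i
    using rmat_tmult_attained[OF FA, of i i] AA' rmat_diag[of i] by metis
  then obtain \<sigma> where \<sigma>: "rmat A i (\<sigma> i) + rmat A' (\<sigma> i) i = 0" for i
    by metis
  have rows: "rmat A i m = rmat A i (\<sigma> i) + rmat E (\<sigma> i) m" for i m
    using AE_le[of i "\<sigma> i" m] A'A_le[of "\<sigma> i" i m] \<sigma>[of i] by linarith
  have cols: "rmat A i (\<sigma> l) = rmat E i l + rmat A l (\<sigma> l)" for i l
    using EA_le[of i l "\<sigma> l"] AA'_le[of i "\<sigma> l" l] \<sigma>[of l] by linarith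
  have "inj \<sigma>"
  proof (rule injI)
    fix i l assume "\<sigma> i = \<sigma> l"
    then have "rmat E i l + rmat E l i = 0" using cols[of i l] cols[of l i] by simp
    then show "i = l" using rmat_two_cycle_neg[of i l] by fastforce
  qed
  then have "bij \<sigma>" by (simp add: bij_def finite_UNIV_inj_surj)
  then show ?thesis using rows cols by (rule that)
qed

lemma H_class_FT_imp_unit_tmult:
  assumes "A \<in> H_class_FT E"
  shows "\<exists>G \<in> G_of E. A = tmult G E"
proof -
  obtain A' where A: "is_FT A" "is_FT A'" "tmult E A = A" "tmult A E = A" "tmult A A' = E" "tmult A' A = E"
    using H_class_FT_local_inverse[OF is_FT idem assms] by blast
  obtain \<sigma> where \<sigma>: "bij \<sigma>"
    and rows: "\<And>i m. rmat A i m = rmat A i (\<sigma> i) + rmat E (\<sigma> i) m"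
    and cols: "\<And>i l. rmat A i (\<sigma> l) = rmat E i l + rmat A l (\<sigma> l)"
    using local_inverse_permutation[OF A] by blast
  define G where "G = monomial_mat \<sigma> (\<lambda>i. rmat A i (\<sigma> i))"
  have TE: "is_T E" using is_FT by (rule is_FT_imp_is_T)
  have GE: "tmult G E = A"
  proof (intro ext)
    fix i j
    have "tmult G E i j = ereal (rmat A i (\<sigma> i)) + E (\<sigma> i) j"
      by (simp add: G_def tmult_monomial_mat_left[OF TE])
    also have "\<dots> = A i j"
      using rows[of i j] by (simp add: entry is_FT_entry[OF A(1), of i j])
    finally show "tmult G E i j = A i j" .
  qed
  have "tmult E G = A"
  proof (intro ext)
    fix i j
    define l where "l = inv_into UNIV \<sigma> j"
    have "\<sigma> l = j" unfolding l_def using \<sigma> by (simp add: bij_is_surj surj_f_inv_f)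
    have "tmult E G i j = E i l + ereal (rmat A l (\<sigma> l))"
      by (simp add: G_def tmult_monomial_mat_right[OF \<sigma> TE] l_def)
    also have "\<dots> = A i j"
      using cols[of i l] \<open>\<sigma> l = j\<close> by (simp add: entry is_FT_entry[OF A(1), of i j])
    finally show "tmult E G i j = A i j" .
  qed
  with GE have "G \<in> G_of E"
    unfolding G_of_def G_def using is_unit_T_monomial_mat[OF \<sigma>] by simp
  with GE show ?thesis by blast
qed

lemma inj_on_tmult_E: "inj_on (\<lambda>G. tmult G E) (G_of E)"
proof (rule inj_onI)
  fix G1 G2 assume G1: "G1 \<in> G_of E" and G2: "G2 \<in> G_of E" and eq: "tmult G1 E = tmult G2 E"
  obtain B1 where B1: "is_T G1" "is_T B1" "tmult G1 B1 = tid" "tmult B1 G1 = tid"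
    using G1 by (rule G_ofE)
  obtain B2 where B2: "is_T G2" "is_T B2" "tmult G2 B2 = tid" "tmult B2 G2 = tid"
    using G2 by (rule G_ofE)
  have TE: "is_T E" using is_FT by (rule is_FT_imp_is_T)
  have "tmult B1 G2 = tid"
  proof (rule unit_fixing_eq_tid)
    show "is_T (tmult B1 G2)" "is_T (tmult B2 G1)"
      using is_T_tmult B1 B2 by blast+
    have "tmult (tmult B1 G2) (tmult B2 G1) = tmult B1 (tmult (tmult G2 B2) G1)"
      by (simp add: tmult_assoc)
    then show "tmult (tmult B1 G2) (tmult B2 G1) = tid"
      using B1(4) B2(3) tmult_tid_left[OF B1(1)] by simp
    have "tmult (tmult B2 G1) (tmult B1 G2) = tmult B2 (tmult (tmult G1 B1) G2)"
      by (simp add: tmult_assoc)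
    then show "tmult (tmult B2 G1) (tmult B1 G2) = tid"
      using B1(3) B2(4) tmult_tid_left[OF B2(1)] by simp
    have "tmult (tmult B1 G2) E = tmult (tmult B1 G1) E"
      using eq by (simp add: tmult_assoc)
    then show "tmult (tmult B1 G2) E = E"
      using B1(4) tmult_tid_left[OF TE] by simp
    have "tmult (tmult B2 G1) E = tmult (tmult B2 G2) E"
      using eq by (simp add: tmult_assoc)
    then show "tmult (tmult B2 G1) E = E"
      using B2(4) tmult_tid_left[OF TE] by simp
  qed
  then have "tmult G1 (tmult B1 G2) = G1" using tmult_tid_right[OF B1(1)] by simp
  then show "G1 = G2" using B1(3) tmult_tid_left[OF B2(1)] by (simp add: tmult_assoc[symmetric])
qed

lemma tmult_E_iso: "(\<lambda>G. tmult G E) \<in> iso (G_group E) (H_group E)"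
proof -
  have "(\<lambda>G. tmult G E) ` G_of E = H_class_FT E"
    using unit_tmult_in_H_class_FT[OF is_FT idem] H_class_FT_imp_unit_tmult by blast
  then show ?thesis
    unfolding iso_def hom_def bij_betw_def G_group_def H_group_def
    using unit_tmult_in_H_class_FT[OF is_FT idem] tmult_E_hom[OF idem] G_of_tmult inj_on_tmult_E
    by auto
qed

end

theorem theorem7p3:
  fixes E :: "('n::finite) tmat"
  assumes "is_FT E" and "tmult E E = E" and "trank E = card (UNIV :: 'n set)"
  shows "group (G_group E) \<and> group (H_group E) \<and>
         (\<forall>G \<in> G_of E. tmult G E = tmult E G) \<and>
         (\<lambda>G. tmult G E) \<in> iso (G_group E) (H_group E)"
proof -
  interpret full_rank_idempotent E using assms by unfold_locales
  have TE: "is_T E" using assms(1) by (rule is_FT_imp_is_T)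
  have G: "group (G_group E)" using TE by (rule group_G_group)
  have "group ((H_group E)\<lparr>one := tmult tid E\<rparr>)"
    using group.iso_imp_img_group[OF G tmult_E_iso] by (simp add: G_group_def)
  then have "group (H_group E)" by (simp add: tmult_tid_left[OF TE] H_group_def)
  then show ?thesis using G tmult_E_iso by (simp add: G_of_def)
qed

end
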